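(* Let $\mathbf S$ be an SRRW in $\mathbb{R}^d$ with parameter $\alpha\in[0,1)$ and step distribution $\mu$ satisfying $\mathbb E\|\mathbf X_1\|<\infty$ and $\mathbb E\mathbf X_1=\mathbf 0$, and let $h$ be $\mu$-integrable. For $n\ge1$ put $\gamma_n:=\frac{1-\alpha}{n+1}$ and $\beta_n:=\prod_{k=1}^{n-1}(1-\gamma_k)$ (with $\beta_1=1$), and for $j\ge1$ $$\epsilon_{j+1}(h):=\frac{h(\mathbf X_{j+1})-\mathbb E h(\mathbf X_1)-\alpha\Delta_j(h)}{1-\alpha}.$$ Then $(\epsilon_{j+1}(h))_{j\ge1}$ is a martingale difference sequence with respect to $(\mathcal F_{j+1})_{j\ge1}$, and $$\Delta_n(h)=\beta_n\Big(h(\mathbf X_1)+\sum_{j=1}^{n-1}\frac{\gamma_j}{\beta_{j+1}}\epsilon_{j+1}(h)\Big),\quad n\ge1.$$ In particular, for all $n>k\ge1$, $\mathbb E(\Delta_n(h)\mid\mathcal F_k)=\frac{\beta_n}{\beta_k}\Delta_k(h)$.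
   Context: SRRW: $\mu$ a probability measure on $\mathbb{R}^d$, $\alpha\in[0,1]$; $(\xi_n)_{n\ge2}$ i.i.d. Bernoulli($\alpha$), $(U[n])_{n\ge1}$ independent with $U[n]$ uniform on $\{1,\dots,n\}$. Sample $\mathbf X_1\sim\mu$; for $n\ge1$, if $\xi_{n+1}=1$ set $\mathbf X_{n+1}=\mathbf X_{U[n]}$, else sample $\mathbf X_{n+1}\sim\mu$ independently. $\mathbf S_n=\sum_{i\le n}\mathbf X_i$, $\mathcal F_n=\sigma(\mathbf X_1,\dots,\mathbf X_n)$. For $\mu$-integrable $g$, $\Delta_n(g):=\frac1n\sum_{i=1}^n g(\mathbf X_i)-\mathbb E g(\mathbf X_1)$. *)

theory Defs
  imports "HOL-Probability.Probability"
begin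

text \<open>Driving randomness of the SRRW: Y n (n >= 1) are i.i.d. samples from mu
  (Y 1 = X_1, Y (n+1) is the fresh sample used at step n+1), xi n (n >= 2) are the
  Bernoulli(alpha) coins, U n (n >= 1) uniform on {1..n}.
  srrw_hist gives the list [X_1, ..., X_n].\<close>

fun srrw_hist :: "(nat \<Rightarrow> 'w \<Rightarrow> 'v) \<Rightarrow> (nat \<Rightarrow> 'w \<Rightarrow> bool) \<Rightarrow> (nat \<Rightarrow> 'w \<Rightarrow> nat)
    \<Rightarrow> nat \<Rightarrow> 'w \<Rightarrow> 'v list" where
  "srrw_hist Y xi U 0 w = []"
| "srrw_hist Y xi U (Suc n) w =
     (let xs = srrw_hist Y xi U n w in
      xs @ [if n = 0 then Y 1 w
            else if xi (Suc n) w then xs ! (U n w - 1) else Y (Suc n) w])"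

text \<open>X_n for n >= 1 (X 0 is a meaningless default).\<close>
definition srrw_X :: "(nat \<Rightarrow> 'w \<Rightarrow> 'v) \<Rightarrow> (nat \<Rightarrow> 'w \<Rightarrow> bool) \<Rightarrow> (nat \<Rightarrow> 'w \<Rightarrow> nat)
    \<Rightarrow> nat \<Rightarrow> 'w \<Rightarrow> 'v" where
  "srrw_X Y xi U n w = srrw_hist Y xi U n w ! (n - 1)"

definition srrw_index :: "(nat + nat + nat) set" where
  "srrw_index = Inl ` {1..} \<union> Inr ` Inl ` {2..} \<union> Inr ` Inr ` {1..}"

definition srrw_drivers_indep ::
  "'w measure \<Rightarrow> (nat \<Rightarrow> 'w \<Rightarrow> 'v::topological_space) \<Rightarrow> (nat \<Rightarrow> 'w \<Rightarrow> bool) \<Rightarrow> (nat \<Rightarrow> 'w \<Rightarrow> nat) \<Rightarrow> bool" where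
  "srrw_drivers_indep M Y xi U =
     prob_space.indep_sets M
       (\<lambda>i. case i of
              Inl n \<Rightarrow> {Y n -` A \<inter> space M | A. A \<in> sets borel}
            | Inr (Inl n) \<Rightarrow> {xi n -` A \<inter> space M | A. True}
            | Inr (Inr n) \<Rightarrow> {U n -` A \<inter> space M | A. True})
       srrw_index"

definition nat_filtration :: "'w measure \<Rightarrow> (nat \<Rightarrow> 'w \<Rightarrow> 'v::topological_space) \<Rightarrow> nat \<Rightarrow> 'w measure" where
  "nat_filtration M X n =
     sigma (space M) {X i -` A \<inter> space M | i A. i \<in> {1..n} \<and> A \<in> sets borel}"

definition srrw_Delta :: "'v measure \<Rightarrow> ('v \<Rightarrow> real) \<Rightarrow> (nat \<Rightarrow> 'w \<Rightarrow> 'v) \<Rightarrow> nat \<Rightarrow> 'w \<Rightarrow> real" where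
  "srrw_Delta mu g X n w = (\<Sum>i=1..n. g (X i w)) / real n - integral\<^sup>L mu g"

definition srrw_gamma :: "real \<Rightarrow> nat \<Rightarrow> real" where
  "srrw_gamma \<alpha> n = (1 - \<alpha>) / (real n + 1)"

definition srrw_beta :: "real \<Rightarrow> nat \<Rightarrow> real" where
  "srrw_beta \<alpha> n = (\<Prod>k\<in>{1..<n}. 1 - srrw_gamma \<alpha> k)"

definition mart_diff_seq :: "'w measure \<Rightarrow> (nat \<Rightarrow> 'w measure) \<Rightarrow> (nat \<Rightarrow> 'w \<Rightarrow> real) \<Rightarrow> bool" where
  "mart_diff_seq M F e =
     (\<forall>j\<ge>1. e (j+1) \<in> borel_measurable (F (j+1)) \<and> integrable M (e (j+1)) \<and>
            (AE w in M. real_cond_exp M (F j) (e (j+1)) w = 0))"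

end

theory Submission
  imports Defs
begin

(* With c = E h(X_1), the recursion Delta_(j+1) = (1 - gamma_j) Delta_j + gamma_j eps_(j+1) is an
   identity between real numbers (it is how eps_(j+1) is defined); unrolled, it is the
   beta-representation of Delta_n.  For the martingale property one conditions not on F_j but on the
   larger sigma-algebra of the drivers Y_1..Y_j, xi_2..xi_j, U_1..U_(j-1).  The new drivers U_j,
   xi_(j+1), Y_(j+1) are independent of it, and X_(j+1) is the copy X_(U_j) of a uniformly chosen
   earlier step with probability alpha and the fresh sample Y_(j+1) otherwise; hence
   E(h(X_(j+1)) | past) = alpha/j (h(X_1) + ... + h(X_j)) + (1 - alpha) c, which says exactly that
   eps_(j+1) has conditional mean zero.  Conditioning the recursion on F_k for j >= k then gives
   E(Delta_(j+1) | F_k) = (1 - gamma_j) E(Delta_j | F_k), and these factors multiply to beta_n / beta_k. *)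

section \<open>Products of functions of independent generators\<close>

lemma Int_stable_vimages:
  assumes "\<And>A B. P A \<Longrightarrow> P B \<Longrightarrow> P (A \<inter> B)"
  shows "Int_stable {f -` A \<inter> S | A. P A}"
proof (rule Int_stableI, clarify)
  fix A B assume "P A" "P B"
  then show "\<exists>C. f -` A \<inter> S \<inter> (f -` B \<inter> S) = f -` C \<inter> S \<and> P C"
    using assms by (intro exI[of _ "A \<inter> B"]) auto
qed

lemma (in prob_space) indep_sets_integral_mult:
  fixes f g :: "'a \<Rightarrow> real"
  assumes indep: "indep_sets E I" and stable: "\<And>i. i \<in> I \<Longrightarrow> Int_stable (E i)"
    and I12: "I1 \<inter> I2 = {}" "I1 \<subseteq> I" "I2 \<subseteq> I"
    and f: "f \<in> borel_measurable (sigma (space M) (\<Union>i\<in>I1. E i))"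
    and g: "g \<in> borel_measurable (sigma (space M) (\<Union>i\<in>I2. E i))"
    and f_int: "integrable M f" and g_int: "integrable M g"
  shows "(\<integral>w. f w * g w \<partial>M) = (\<integral>w. f w \<partial>M) * (\<integral>w. g w \<partial>M)"
    and "integrable M (\<lambda>w. f w * g w)"
proof -
  have E_events: "E i \<subseteq> events" if "i \<in> I" for i
    using indep that by (simp add: indep_sets_def)
  have generated_le: "sigma_sets (space M) {u -` A \<inter> space M | A. A \<in> sets borel}
      \<subseteq> sigma_sets (space M) (\<Union>i\<in>J. E i)"
    if J: "J \<subseteq> I" and u: "u \<in> borel_measurable (sigma (space M) (\<Union>i\<in>J. E i))" for J and u :: "'a \<Rightarrow> real"
  proof -
    have "(\<Union>i\<in>J. E i) \<subseteq> Pow (space M)"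
      using J E_events sets.sets_into_space by (meson PowI UN_least subset_iff)
    then have "space (sigma (space M) (\<Union>i\<in>J. E i)) = space M"
      and "sets (sigma (space M) (\<Union>i\<in>J. E i)) = sigma_sets (space M) (\<Union>i\<in>J. E i)"
      by (simp_all add: sets_measure_of)
    with measurable_sets[OF u] show ?thesis
      by (intro sigma_sets_mono) auto
  qed
  have "indep_sets (\<lambda>b. sigma_sets (space M) (\<Union>i\<in>case_bool I1 I2 b. E i)) UNIV"
  proof (rule indep_sets_collect_sigma)
    show "indep_sets E (\<Union>b. case_bool I1 I2 b)"
      using I12 by (intro indep_sets_mono_index[OF _ indep]) (auto split: bool.split_asm)
    show "Int_stable (E i)" if "i \<in> case_bool I1 I2 b" for i b
      using that I12 by (intro stable) (auto split: bool.splits)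
    show "disjoint_family_on (case_bool I1 I2) UNIV"
      using I12 by (auto simp: disjoint_family_on_def split: bool.splits)
  qed
  then have "indep_sets (\<lambda>b. sigma_sets (space M)
      {case_bool f g b -` A \<inter> space M | A. A \<in> sets (case_bool borel borel b)}) UNIV"
    by (rule indep_sets_mono_sets)
      (use generated_le[OF I12(2) f] generated_le[OF I12(3) g] in \<open>simp split: bool.split\<close>)
  moreover have "f \<in> borel_measurable M" "g \<in> borel_measurable M"
    using f_int g_int by auto
  ultimately have "indep_var borel f borel g"
    unfolding indep_var_def indep_vars_def by (auto split: bool.split)
  then show "(\<integral>w. f w * g w \<partial>M) = (\<integral>w. f w \<partial>M) * (\<integral>w. g w \<partial>M)" "integrable M (\<lambda>w. f w * g w)"
    using f_int g_int by (simp_all add: indep_var_lebesgue_integral indep_var_integrable)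
qed

lemma
  shows space_nat_filtration [simp]: "space (nat_filtration M X n) = space M"
    and sets_nat_filtration: "sets (nat_filtration M X n)
      = sigma_sets (space M) {X i -` A \<inter> space M | i A. i \<in> {1..n} \<and> A \<in> sets borel}"
  unfolding nat_filtration_def by (auto intro!: space_measure_of sets_measure_of)

lemma measurable_nat_filtration: "i \<in> {1..n} \<Longrightarrow> X i \<in> borel_measurable (nat_filtration M X n)"
  by (rule measurableI) (auto simp: sets_nat_filtration)

lemma sets_nat_filtration_subset:
  assumes space: "space N = space M" and X: "\<And>i. i \<in> {1..n} \<Longrightarrow> X i \<in> borel_measurable N"
  shows "sets (nat_filtration M X n) \<subseteq> sets N"
proof -
  have "{X i -` A \<inter> space M | i A. i \<in> {1..n} \<and> A \<in> sets borel} \<subseteq> sets N"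
    using measurable_sets[OF X] space by auto
  then show ?thesis
    unfolding sets_nat_filtration using sigma_sets_le_sets_iff[of N] space by simp
qed

section \<open>The history of the walk\<close>

lemma length_srrw_hist [simp]: "length (srrw_hist Y \<xi> U n w) = n"
  by (induction n) (auto simp: Let_def)

lemma srrw_hist_nth:
  "srrw_hist Y \<xi> U n w ! k = (if k < n then srrw_X Y \<xi> U (Suc k) w else [] ! (k - n))"
proof (induction n arbitrary: k)
  case (Suc n)
  then show ?case
    by (cases "k < n"; cases "k = n")
      (auto simp: Let_def nth_append srrw_X_def nth_Cons' Suc_diff_Suc not_less)
qed simp

lemma srrw_X_1 [simp]: "srrw_X Y \<xi> U (Suc 0) w = Y (Suc 0) w"
  by (simp add: srrw_X_def)

lemma srrw_X_Suc:
  "n \<ge> 1 \<Longrightarrow> srrw_X Y \<xi> U (Suc n) w =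
     (if \<xi> (Suc n) w then srrw_hist Y \<xi> U n w ! (U n w - 1) else Y (Suc n) w)"
  by (simp add: srrw_X_def Let_def nth_append)

lemma srrw_X_Suc_copy:
  assumes "n \<ge> 1" and "U n w \<in> {1..n}"
  shows "srrw_X Y \<xi> U (Suc n) w = (if \<xi> (Suc n) w then srrw_X Y \<xi> U (U n w) w else Y (Suc n) w)"
  using assms by (auto simp: srrw_X_Suc srrw_hist_nth)

section \<open>The recursion for the running mean\<close>

definition srrw_eps :: "real \<Rightarrow> 'v measure \<Rightarrow> ('v \<Rightarrow> real) \<Rightarrow> (nat \<Rightarrow> 'w \<Rightarrow> 'v) \<Rightarrow> nat \<Rightarrow> 'w \<Rightarrow> real" where
  "srrw_eps \<alpha> \<mu> g X n w = (g (X n w) - integral\<^sup>L \<mu> g - \<alpha> * srrw_Delta \<mu> g X (n - 1) w) / (1 - \<alpha>)"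

lemma srrw_Delta_Suc:
  assumes "\<alpha> \<noteq> 1" and "n \<ge> 1"
  shows "srrw_Delta \<mu> g X (Suc n) w
    = (1 - srrw_gamma \<alpha> n) * srrw_Delta \<mu> g X n w + srrw_gamma \<alpha> n * srrw_eps \<alpha> \<mu> g X (Suc n) w"
proof -
  have "real n \<noteq> 0" "real n + 1 \<noteq> 0" "1 - \<alpha> \<noteq> 0" using assms by auto
  moreover have "(\<Sum>i=1..Suc n. g (X i w)) = (\<Sum>i=1..n. g (X i w)) + g (X (Suc n) w)"
    by simp
  ultimately show ?thesis
    unfolding srrw_Delta_def srrw_eps_def srrw_gamma_def
    by (simp add: divide_simps) (simp add: algebra_simps)
qed

lemma srrw_beta_Suc: "n \<ge> 1 \<Longrightarrow> srrw_beta \<alpha> (Suc n) = srrw_beta \<alpha> n * (1 - srrw_gamma \<alpha> n)"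
  by (simp add: srrw_beta_def prod.atLeastLessThan_Suc)

lemma srrw_beta_pos:
  assumes "-1 < \<alpha>"
  shows "0 < srrw_beta \<alpha> n"
  unfolding srrw_beta_def
proof (rule prod_pos)
  fix k assume "k \<in> {1..<n}"
  with assms have "1 - \<alpha> < real k + 1" by simp
  then show "0 < 1 - srrw_gamma \<alpha> k" by (simp add: srrw_gamma_def)
qed

lemma srrw_Delta_eq_beta_sum:
  assumes "-1 < \<alpha>" and "\<alpha> \<noteq> 1" and "n \<ge> 1"
  shows "srrw_Delta \<mu> g X n w = srrw_beta \<alpha> n * ((g (X 1 w) - integral\<^sup>L \<mu> g)
           + (\<Sum>j\<in>{1..<n}. srrw_gamma \<alpha> j / srrw_beta \<alpha> (j+1) * srrw_eps \<alpha> \<mu> g X (j+1) w))"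
  using \<open>n \<ge> 1\<close>
proof (induction n rule: nat_induct_at_least)
  case base
  then show ?case by (simp add: srrw_Delta_def srrw_beta_def)
next
  case (Suc n)
  let ?\<beta> = "srrw_beta \<alpha>" and ?\<gamma> = "srrw_gamma \<alpha>" and ?\<epsilon> = "srrw_eps \<alpha> \<mu> g X"
  let ?T = "(g (X 1 w) - integral\<^sup>L \<mu> g) + (\<Sum>j\<in>{1..<n}. ?\<gamma> j / ?\<beta> (j+1) * ?\<epsilon> (j+1) w)"
  have "srrw_Delta \<mu> g X (Suc n) w = (1 - ?\<gamma> n) * srrw_Delta \<mu> g X n w + ?\<gamma> n * ?\<epsilon> (Suc n) w"
    using srrw_Delta_Suc[OF assms(2) Suc(1)] .
  also have "\<dots> = ?\<beta> (Suc n) * ?T + ?\<gamma> n * ?\<epsilon> (Suc n) w"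
    using Suc(2) srrw_beta_Suc[OF Suc(1)] by simp
  also have "\<dots> = ?\<beta> (Suc n) * (?T + ?\<gamma> n / ?\<beta> (Suc n) * ?\<epsilon> (Suc n) w)"
    using srrw_beta_pos[OF assms(1), of "Suc n"] by (simp add: field_simps)
  finally show ?case using Suc(1) by (simp add: sum.atLeastLessThan_Suc add.assoc)
qed

section \<open>The walk driven by independent variables\<close>

definition srrw_driver_events :: "'w measure \<Rightarrow> (nat \<Rightarrow> 'w \<Rightarrow> 'v::topological_space)
    \<Rightarrow> (nat \<Rightarrow> 'w \<Rightarrow> bool) \<Rightarrow> (nat \<Rightarrow> 'w \<Rightarrow> nat) \<Rightarrow> nat + nat + nat \<Rightarrow> 'w set set" where
  "srrw_driver_events M Y \<xi> U = (\<lambda>i. case i of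
       Inl n \<Rightarrow> {Y n -` A \<inter> space M | A. A \<in> sets borel}
     | Inr (Inl n) \<Rightarrow> {\<xi> n -` A \<inter> space M | A. True}
     | Inr (Inr n) \<Rightarrow> {U n -` A \<inter> space M | A. True})"

lemma srrw_drivers_indep_iff:
  "srrw_drivers_indep M Y \<xi> U \<longleftrightarrow> prob_space.indep_sets M (srrw_driver_events M Y \<xi> U) srrw_index"
  unfolding srrw_drivers_indep_def srrw_driver_events_def ..

lemma Int_stable_srrw_driver_events: "Int_stable (srrw_driver_events M Y \<xi> U i)"
  unfolding srrw_driver_events_def
  by (simp only: split: sum.split) (intro conjI allI impI Int_stable_vimages; auto)

lemma srrw_driver_events_subset_Pow: "srrw_driver_events M Y \<xi> U i \<subseteq> Pow (space M)"
  by (auto simp: srrw_driver_events_def split: sum.split)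

(* The drivers that X_1, ..., X_j are built from. *)
definition srrw_drivers_upto :: "nat \<Rightarrow> (nat + nat + nat) set" where
  "srrw_drivers_upto j = Inl ` {1..j} \<union> Inr ` Inl ` {2..j} \<union> Inr ` Inr ` {1..<j}"

lemma mem_srrw_index [simp]:
  "Inl n \<in> srrw_index \<longleftrightarrow> 1 \<le> n"
  "Inr (Inl n) \<in> srrw_index \<longleftrightarrow> 2 \<le> n"
  "Inr (Inr n) \<in> srrw_index \<longleftrightarrow> 1 \<le> n"
  by (auto simp: srrw_index_def image_iff)

lemma mem_srrw_drivers_upto [simp]:
  "Inl n \<in> srrw_drivers_upto j \<longleftrightarrow> 1 \<le> n \<and> n \<le> j"
  "Inr (Inl n) \<in> srrw_drivers_upto j \<longleftrightarrow> 2 \<le> n \<and> n \<le> j"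
  "Inr (Inr n) \<in> srrw_drivers_upto j \<longleftrightarrow> 1 \<le> n \<and> n < j"
  by (auto simp: srrw_drivers_upto_def image_iff)

lemma srrw_drivers_upto_subset: "srrw_drivers_upto j \<subseteq> srrw_index"
  unfolding srrw_drivers_upto_def srrw_index_def by auto

locale srrw = prob_space M for M :: "'w measure" +
  fixes \<mu> :: "'v::topological_space measure" and \<alpha> :: real
    and Y :: "nat \<Rightarrow> 'w \<Rightarrow> 'v" and \<xi> :: "nat \<Rightarrow> 'w \<Rightarrow> bool" and U :: "nat \<Rightarrow> 'w \<Rightarrow> nat"
    and h :: "'v \<Rightarrow> real"
  assumes \<alpha>_nonneg: "0 \<le> \<alpha>" and \<alpha>_less_1: "\<alpha> < 1"
    and Y_measurable: "\<And>n. n \<ge> 1 \<Longrightarrow> Y n \<in> borel_measurable M"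
    and \<xi>_measurable: "\<And>n. n \<ge> 2 \<Longrightarrow> \<xi> n \<in> measurable M (count_space UNIV)"
    and U_measurable: "\<And>n. n \<ge> 1 \<Longrightarrow> U n \<in> measurable M (count_space UNIV)"
    and distr_Y: "\<And>n. n \<ge> 1 \<Longrightarrow> distr M borel (Y n) = \<mu>"
    and distr_\<xi>: "\<And>n. n \<ge> 2 \<Longrightarrow> distr M (count_space UNIV) (\<xi> n) = measure_pmf (bernoulli_pmf \<alpha>)"
    and distr_U: "\<And>n. n \<ge> 1 \<Longrightarrow> distr M (count_space UNIV) (U n) = measure_pmf (pmf_of_set {1..n})"
    and indep_drivers: "indep_sets (srrw_driver_events M Y \<xi> U) srrw_index"
    and integrable_h: "integrable \<mu> h"
begin

abbreviation "X \<equiv> srrw_X Y \<xi> U"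

definition driver_sigma :: "(nat + nat + nat) set \<Rightarrow> 'w measure" where
  "driver_sigma I = sigma (space M) (\<Union>i\<in>I. srrw_driver_events M Y \<xi> U i)"

lemma
  shows space_driver_sigma [simp]: "space (driver_sigma I) = space M"
    and sets_driver_sigma: "sets (driver_sigma I) = sigma_sets (space M) (\<Union>i\<in>I. srrw_driver_events M Y \<xi> U i)"
proof -
  have "(\<Union>i\<in>I. srrw_driver_events M Y \<xi> U i) \<subseteq> Pow (space M)"
    using srrw_driver_events_subset_Pow by (rule UN_least)
  then show "space (driver_sigma I) = space M"
    and "sets (driver_sigma I) = sigma_sets (space M) (\<Union>i\<in>I. srrw_driver_events M Y \<xi> U i)"
    unfolding driver_sigma_def by (simp_all add: space_measure_of sets_measure_of)
qed

lemma driver_event_in_driver_sigma: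
  "i \<in> I \<Longrightarrow> S \<in> srrw_driver_events M Y \<xi> U i \<Longrightarrow> S \<in> sets (driver_sigma I)"
  unfolding sets_driver_sigma by auto

lemma sets_driver_sigma_mono: "I \<subseteq> J \<Longrightarrow> sets (driver_sigma I) \<subseteq> sets (driver_sigma J)"
  unfolding sets_driver_sigma by (intro sigma_sets_mono') auto

lemma subalgebra_driver_sigma:
  assumes "I \<subseteq> srrw_index"
  shows "subalgebra M (driver_sigma I)"
proof -
  have "(\<Union>i\<in>I. srrw_driver_events M Y \<xi> U i) \<subseteq> events"
    using indep_drivers assms unfolding indep_sets_def by blast
  then show ?thesis
    unfolding subalgebra_def sets_driver_sigma by (simp add: sigma_sets_le_sets_iff)
qed

lemma integral_mult_driver_sigma:
  fixes f g :: "'w \<Rightarrow> real"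
  assumes "I1 \<inter> I2 = {}" "I1 \<subseteq> srrw_index" "I2 \<subseteq> srrw_index"
    and "f \<in> borel_measurable (driver_sigma I1)" "g \<in> borel_measurable (driver_sigma I2)"
    and "integrable M f" "integrable M g"
  shows "(\<integral>w. f w * g w \<partial>M) = (\<integral>w. f w \<partial>M) * (\<integral>w. g w \<partial>M)"
    and "integrable M (\<lambda>w. f w * g w)"
  using indep_sets_integral_mult[OF indep_drivers Int_stable_srrw_driver_events
      assms[unfolded driver_sigma_def]] by blast+

lemma integral_indicator_mult_driver_sigma:
  assumes "I1 \<inter> I2 = {}" "I1 \<subseteq> srrw_index" "I2 \<subseteq> srrw_index"
    and A: "A \<in> sets (driver_sigma I1)" and B: "B \<in> sets (driver_sigma I2)"
  shows "(\<integral>w. indicator A w * indicator B w \<partial>M) = prob A * (prob B :: real)"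
proof -
  have "A \<in> events" "B \<in> events"
    using A B subalgebra_driver_sigma assms(2,3) unfolding subalgebra_def by blast+
  then show ?thesis
    using integral_mult_driver_sigma(1)[OF assms(1-3), of "indicator A" "indicator B"] A B
    by (simp add: less_top[symmetric])
qed

lemma measurable_Y_driver_sigma: "Inl n \<in> I \<Longrightarrow> Y n \<in> borel_measurable (driver_sigma I)"
  by (rule measurableI) (auto intro!: driver_event_in_driver_sigma exI simp: srrw_driver_events_def)

lemma measurable_\<xi>_driver_sigma:
  "Inr (Inl n) \<in> I \<Longrightarrow> \<xi> n \<in> measurable (driver_sigma I) (count_space UNIV)"
  by (rule measurableI) (auto intro!: driver_event_in_driver_sigma exI simp: srrw_driver_events_def)

lemma measurable_U_driver_sigma:
  "Inr (Inr n) \<in> I \<Longrightarrow> U n \<in> measurable (driver_sigma I) (count_space UNIV)"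
  by (rule measurableI) (auto intro!: driver_event_in_driver_sigma exI simp: srrw_driver_events_def)

lemma measurable_X_driver_sigma:
  "1 \<le> i \<Longrightarrow> i \<le> j \<Longrightarrow> X i \<in> borel_measurable (driver_sigma (srrw_drivers_upto j))"
proof (induction i rule: less_induct)
  case (less i)
  let ?S = "driver_sigma (srrw_drivers_upto j)"
  show ?case
  proof (cases "i = 1")
    case True
    then show ?thesis
      using less.prems by (simp add: measurable_Y_driver_sigma)
  next
    case False
    with less.prems obtain n where i: "i = Suc n" and n: "n \<ge> 1" by (cases i) auto
    (* needed for every k, including those beyond the history, where the lookup is a junk constant *)
    have pick: "(\<lambda>w. srrw_hist Y \<xi> U n w ! (k - 1)) \<in> borel_measurable ?S" for k
    proof (cases "k - 1 < n")
      case True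
      then show ?thesis
        using less.IH[of "Suc (k - 1)"] i less.prems by (simp add: srrw_hist_nth)
    qed (simp add: srrw_hist_nth measurable_const)
    have "U n \<in> measurable ?S (count_space UNIV)" "\<xi> (Suc n) \<in> measurable ?S (count_space UNIV)"
      using i n less.prems
      by (auto intro!: measurable_U_driver_sigma measurable_\<xi>_driver_sigma)
    note choices = measurable_compose_countable[OF _ this(1)] measurable_compose_countable[OF _ this(2)]
    have copied: "(\<lambda>w. srrw_hist Y \<xi> U n w ! (U n w - 1)) \<in> borel_measurable ?S"
      using choices(1)[OF pick] .
    have fresh: "Y (Suc n) \<in> borel_measurable ?S"
      using i less.prems by (intro measurable_Y_driver_sigma) auto
    have "(\<lambda>w. if \<xi> (Suc n) w then srrw_hist Y \<xi> U n w ! (U n w - 1) else Y (Suc n) w)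
        \<in> borel_measurable ?S"
    proof (rule choices(2))
      show "(\<lambda>w. if b then srrw_hist Y \<xi> U n w ! (U n w - 1) else Y (Suc n) w) \<in> borel_measurable ?S"
        for b using copied fresh by (cases b) simp_all
    qed
    then show ?thesis
      using i n by (simp add: srrw_X_Suc)
  qed
qed

lemma measurable_X: "1 \<le> i \<Longrightarrow> X i \<in> borel_measurable M"
  using measurable_X_driver_sigma[of i i] subalgebra_driver_sigma[OF srrw_drivers_upto_subset]
  by (blast intro: measurable_from_subalg)

lemma borel_measurable_h: "h \<in> borel_measurable borel"
proof -
  have "sets \<mu> = sets borel"
    using distr_Y[of 1] by (metis le_refl sets_distr)
  then show ?thesis
    using borel_measurable_integrable[OF integrable_h] measurable_cong_sets by blast
qed

lemma integrable_h_Y: "n \<ge> 1 \<Longrightarrow> integrable M (\<lambda>w. h (Y n w))"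
  using integrable_distr_eq[OF Y_measurable borel_measurable_h, of n] distr_Y[of n] integrable_h
  by simp

lemma integral_h_Y: "n \<ge> 1 \<Longrightarrow> (\<integral>w. h (Y n w) \<partial>M) = integral\<^sup>L \<mu> h"
  using integral_distr[OF Y_measurable borel_measurable_h, of n] distr_Y[of n] by simp

definition copy_event :: "nat \<Rightarrow> 'w set" where
  "copy_event j = {w \<in> space M. \<xi> (Suc j) w}"

definition choice_event :: "nat \<Rightarrow> nat \<Rightarrow> 'w set" where
  "choice_event j k = {w \<in> space M. U j w = k}"

lemma copy_event_in_driver_sigma:
  "Inr (Inl (Suc j)) \<in> I \<Longrightarrow> copy_event j \<in> sets (driver_sigma I)"
  by (rule driver_event_in_driver_sigma[of "Inr (Inl (Suc j))"])
    (auto simp: srrw_driver_events_def copy_event_def intro!: exI[of _ "{True}"])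

lemma choice_event_in_driver_sigma:
  "Inr (Inr j) \<in> I \<Longrightarrow> choice_event j k \<in> sets (driver_sigma I)"
  by (rule driver_event_in_driver_sigma[of "Inr (Inr j)"])
    (auto simp: srrw_driver_events_def choice_event_def intro!: exI[of _ "{k}"])

lemma sets_driver_sigma_events: "I \<subseteq> srrw_index \<Longrightarrow> S \<in> sets (driver_sigma I) \<Longrightarrow> S \<in> events"
  using subalgebra_driver_sigma unfolding subalgebra_def by blast

lemma copy_event_events: "j \<ge> 1 \<Longrightarrow> copy_event j \<in> events"
  by (rule sets_driver_sigma_events[of "{Inr (Inl (Suc j))}"]) (auto intro: copy_event_in_driver_sigma)

lemma choice_event_events: "j \<ge> 1 \<Longrightarrow> choice_event j k \<in> events"
  by (rule sets_driver_sigma_events[of "{Inr (Inr j)}"]) (auto intro: choice_event_in_driver_sigma)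

lemma prob_copy_event: "j \<ge> 1 \<Longrightarrow> prob (copy_event j) = \<alpha>"
  using measure_distr[OF \<xi>_measurable, of "Suc j" "{True}"] distr_\<xi>[of "Suc j"] \<alpha>_nonneg \<alpha>_less_1
  by (simp add: measure_pmf_single vimage_def Int_def copy_event_def conj_commute)

lemma prob_choice_event: "j \<ge> 1 \<Longrightarrow> k \<in> {1..j} \<Longrightarrow> prob (choice_event j k) = 1 / j"
  using measure_distr[OF U_measurable, of j "{k}"] distr_U[of j]
  by (simp add: measure_pmf_single vimage_def Int_def choice_event_def conj_commute)

lemma AE_U_range:
  assumes "j \<ge> 1"
  shows "AE w in M. U j w \<in> {1..j}"
proof (rule AE_distrD[OF U_measurable[OF assms]])
  show "AE k in distr M (count_space UNIV) (U j). k \<in> {1..j}"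
    unfolding distr_U[OF assms] using assms by (simp add: AE_measure_pmf_iff set_pmf_of_set)
qed

(* Almost surely equal to h (X (Suc j)), but written as a sum of products of a function of the past
   with a function of the new drivers U_j, xi_(j+1), Y_(j+1). *)
definition h_next :: "nat \<Rightarrow> 'w \<Rightarrow> real" where
  "h_next j w = (\<Sum>k\<in>{1..j}. h (X k w) * indicator (choice_event j k) w) * indicator (copy_event j) w
     + h (Y (Suc j) w) * indicator (space M - copy_event j) w"

lemma AE_h_X_Suc_eq_h_next:
  assumes j: "j \<ge> 1"
  shows "AE w in M. h (X (Suc j) w) = h_next j w"
proof (rule AE_mp[OF AE_U_range[OF j] AE_I2], rule impI)
  fix w assume w: "w \<in> space M" and U: "U j w \<in> {1..j}"
  have "(\<Sum>k\<in>{1..j}. h (X k w) * indicator (choice_event j k) w) = h (X (U j w) w)"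
    using U w by (simp add: choice_event_def indicator_def if_distrib[of "(*) _"] sum.delta' cong: if_cong)
  then show "h (X (Suc j) w) = h_next j w"
    using srrw_X_Suc_copy[of j U w Y \<xi>] j U w by (simp add: h_next_def copy_event_def indicator_def)
qed

lemma integrable_h_next:
  assumes j: "j \<ge> 1" and int_X: "\<And>k. k \<in> {1..j} \<Longrightarrow> integrable M (\<lambda>w. h (X k w))"
  shows "integrable M (h_next j)"
  unfolding h_next_def using j
  by (intro Bochner_Integration.integrable_add integrable_real_mult_indicator integrable_h_Y
      Bochner_Integration.integrable_sum copy_event_events choice_event_events int_X sets.compl_sets)
    auto

lemma integrable_h_X: "n \<ge> 1 \<Longrightarrow> integrable M (\<lambda>w. h (X n w))"
proof (induction n rule: less_induct)
  case (less n)
  show ?case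
  proof (cases "n = 1")
    case True
    then show ?thesis using integrable_h_Y[of 1] by simp
  next
    case False
    with less.prems obtain j where n: "n = Suc j" and j: "j \<ge> 1" by (cases n) auto
    have "integrable M (h_next j)"
      using j n by (intro integrable_h_next less.IH) auto
    moreover have "(\<lambda>w. h (X n w)) \<in> borel_measurable M"
      using less.prems measurable_X borel_measurable_h by measurable
    ultimately show ?thesis
      using integrable_cong_AE[OF _ borel_measurable_integrable AE_h_X_Suc_eq_h_next[OF j]] n by simp
  qed
qed

section \<open>The conditional mean of the next step\<close>

lemma not_copy_event_in_driver_sigma:
  "Inr (Inl (Suc j)) \<in> I \<Longrightarrow> space M - copy_event j \<in> sets (driver_sigma I)"
  using sets.compl_sets[OF copy_event_in_driver_sigma] by simp

lemma
  assumes j: "j \<ge> 1" and A: "A \<in> sets (driver_sigma (srrw_drivers_upto j))" and k: "k \<in> {1..j}"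
  shows integral_copied_term: "(\<integral>w. (h (X k w) * indicator A w)
      * (indicator (choice_event j k) w * indicator (copy_event j) w) \<partial>M)
      = \<alpha> / j * (\<integral>w. h (X k w) * indicator A w \<partial>M)"
    and integrable_copied_term: "integrable M (\<lambda>w. (h (X k w) * indicator A w)
      * (indicator (choice_event j k) w * indicator (copy_event j) w))"
proof -
  have index: "srrw_drivers_upto j \<inter> {Inr (Inr j), Inr (Inl (Suc j))} = {}"
    "{Inr (Inr j)} \<inter> {Inr (Inl (Suc j))} = {}" "{Inr (Inr j), Inr (Inl (Suc j))} \<subseteq> srrw_index"
    using j by auto
  have choice_copy: "(\<integral>w. indicator (choice_event j k) w * indicator (copy_event j) w \<partial>M) = 1 / j * \<alpha>"
    using integral_indicator_mult_driver_sigma[OF index(2)] j k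
    by (simp add: choice_event_in_driver_sigma copy_event_in_driver_sigma prob_choice_event prob_copy_event)
  have "(\<lambda>w. h (X k w) * indicator A w) \<in> borel_measurable (driver_sigma (srrw_drivers_upto j))"
    using k A measurable_compose[OF measurable_X_driver_sigma borel_measurable_h] by auto
  moreover have "integrable M (\<lambda>w. h (X k w) * indicator A w)"
    using k sets_driver_sigma_events[OF srrw_drivers_upto_subset A]
    by (intro integrable_real_mult_indicator integrable_h_X) auto
  moreover have "(\<lambda>w. indicator (choice_event j k) w * indicator (copy_event j) w :: real)
      \<in> borel_measurable (driver_sigma {Inr (Inr j), Inr (Inl (Suc j))})"
    by (intro borel_measurable_times borel_measurable_indicator
        choice_event_in_driver_sigma copy_event_in_driver_sigma) auto
  moreover have "integrable M (\<lambda>w. indicator (choice_event j k) w * indicator (copy_event j) w :: real)"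
    using j by (intro integrable_real_mult_indicator copy_event_events integrable_real_indicator
        choice_event_events) (auto simp: less_top[symmetric])
  ultimately show "(\<integral>w. (h (X k w) * indicator A w)
      * (indicator (choice_event j k) w * indicator (copy_event j) w) \<partial>M)
      = \<alpha> / j * (\<integral>w. h (X k w) * indicator A w \<partial>M)"
    "integrable M (\<lambda>w. (h (X k w) * indicator A w)
      * (indicator (choice_event j k) w * indicator (copy_event j) w))"
    using integral_mult_driver_sigma[OF index(1) srrw_drivers_upto_subset index(3)] choice_copy
    by auto
qed

lemma
  assumes j: "j \<ge> 1" and A: "A \<in> sets (driver_sigma (srrw_drivers_upto j))"
  shows integral_fresh_term: "(\<integral>w. (indicator A w * indicator (space M - copy_event j) w)
      * h (Y (Suc j) w) \<partial>M) = (1 - \<alpha>) * prob A * integral\<^sup>L \<mu> h"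
    and integrable_fresh_term: "integrable M (\<lambda>w. (indicator A w * indicator (space M - copy_event j) w)
      * h (Y (Suc j) w))"
proof -
  let ?past = "srrw_drivers_upto j"
  have index: "?past \<inter> {Inr (Inl (Suc j))} = {}" "(?past \<union> {Inr (Inl (Suc j))}) \<inter> {Inl (Suc j)} = {}"
    "{Inr (Inl (Suc j))} \<subseteq> srrw_index" "?past \<union> {Inr (Inl (Suc j))} \<subseteq> srrw_index"
    "{Inl (Suc j)} \<subseteq> srrw_index"
    using j srrw_drivers_upto_subset by auto
  have A_not_copy: "(\<integral>w. indicator A w * indicator (space M - copy_event j) w \<partial>M) = prob A * (1 - \<alpha>)"
    using integral_indicator_mult_driver_sigma[OF index(1) srrw_drivers_upto_subset index(3) A
        not_copy_event_in_driver_sigma] j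
    by (simp add: prob_compl copy_event_events prob_copy_event)
  have "(\<lambda>w. indicator A w * indicator (space M - copy_event j) w :: real)
      \<in> borel_measurable (driver_sigma (?past \<union> {Inr (Inl (Suc j))}))"
    using sets_driver_sigma_mono[of ?past "?past \<union> {Inr (Inl (Suc j))}"] A
    by (intro borel_measurable_times borel_measurable_indicator not_copy_event_in_driver_sigma) auto
  moreover have "integrable M (\<lambda>w. indicator A w * indicator (space M - copy_event j) w :: real)"
    using j sets_driver_sigma_events[OF srrw_drivers_upto_subset A]
    by (intro integrable_real_mult_indicator integrable_real_indicator sets.compl_sets copy_event_events)
      (auto simp: less_top[symmetric])
  moreover have "(\<lambda>w. h (Y (Suc j) w)) \<in> borel_measurable (driver_sigma {Inl (Suc j)})"
    using measurable_compose[OF measurable_Y_driver_sigma borel_measurable_h] by simp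
  ultimately show "(\<integral>w. (indicator A w * indicator (space M - copy_event j) w)
      * h (Y (Suc j) w) \<partial>M) = (1 - \<alpha>) * prob A * integral\<^sup>L \<mu> h"
    "integrable M (\<lambda>w. (indicator A w * indicator (space M - copy_event j) w) * h (Y (Suc j) w))"
    using integral_mult_driver_sigma[OF index(2,4,5)] A_not_copy integrable_h_Y[of "Suc j"]
      integral_h_Y[of "Suc j"] by auto
qed

lemma integral_h_X_Suc_indicator:
  assumes j: "j \<ge> 1" and A: "A \<in> sets (driver_sigma (srrw_drivers_upto j))"
  shows "(\<integral>w. h (X (Suc j) w) * indicator A w \<partial>M)
    = \<alpha> / j * (\<Sum>k\<in>{1..j}. \<integral>w. h (X k w) * indicator A w \<partial>M) + (1 - \<alpha>) * prob A * integral\<^sup>L \<mu> h"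
proof -
  let ?copied = "\<lambda>k w. (h (X k w) * indicator A w) * (indicator (choice_event j k) w * indicator (copy_event j) w)"
    and ?fresh = "\<lambda>w. (indicator A w * indicator (space M - copy_event j) w) * h (Y (Suc j) w)"
  have "(\<integral>w. h (X (Suc j) w) * indicator A w \<partial>M) = (\<integral>w. h_next j w * indicator A w \<partial>M)"
    using AE_h_X_Suc_eq_h_next[OF j] sets_driver_sigma_events[OF srrw_drivers_upto_subset A]
      measurable_X borel_measurable_h borel_measurable_integrable[OF integrable_h_next[OF j integrable_h_X]]
    by (intro integral_cong_AE) (auto elim!: AE_mp)
  also have "\<dots> = (\<integral>w. (\<Sum>k\<in>{1..j}. ?copied k w) + ?fresh w \<partial>M)"
    by (intro Bochner_Integration.integral_cong refl)
      (simp only: h_next_def sum_distrib_left distrib_left mult_ac)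
  also have "\<dots> = (\<integral>w. (\<Sum>k\<in>{1..j}. ?copied k w) \<partial>M) + (\<integral>w. ?fresh w \<partial>M)"
    using integrable_copied_term[OF j A] integrable_fresh_term[OF j A]
    by (intro Bochner_Integration.integral_add Bochner_Integration.integrable_sum) auto
  also have "\<dots> = (\<Sum>k\<in>{1..j}. \<integral>w. ?copied k w \<partial>M) + (\<integral>w. ?fresh w \<partial>M)"
    using integrable_copied_term[OF j A] by (simp add: Bochner_Integration.integral_sum)
  finally show ?thesis
    using integral_copied_term[OF j A] integral_fresh_term[OF j A] by (simp add: sum_distrib_left)
qed

section \<open>Martingale structure\<close>

abbreviation "F \<equiv> nat_filtration M X"
abbreviation "\<Delta> \<equiv> srrw_Delta \<mu> h X"
abbreviation "\<epsilon> \<equiv> srrw_eps \<alpha> \<mu> h X"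

lemma sets_nat_filtration_subset_driver_sigma:
  "k \<le> j \<Longrightarrow> sets (F k) \<subseteq> sets (driver_sigma (srrw_drivers_upto j))"
  by (intro sets_nat_filtration_subset measurable_X_driver_sigma) auto

lemma sigma_finite_subalgebra_nat_filtration: "sigma_finite_subalgebra M (F k)"
proof (rule finite_measure_subalgebra_is_sigma_finite)
  have "sets (F k) \<subseteq> events"
    using measurable_X by (intro sets_nat_filtration_subset) auto
  then have "subalgebra M (F k)"
    unfolding subalgebra_def by simp
  then show "finite_measure_subalgebra M (F k)"
    by (simp add: finite_measure_subalgebra_def finite_measure_subalgebra_axioms_def finite_measure_axioms)
qed

lemma measurable_Delta_nat_filtration: "m \<le> n \<Longrightarrow> \<Delta> m \<in> borel_measurable (F n)"
  unfolding srrw_Delta_def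
  using measurable_compose[OF measurable_nat_filtration borel_measurable_h] by measurable

lemma integrable_Delta: "integrable M (\<Delta> n)"
  unfolding srrw_Delta_def
  by (intro Bochner_Integration.integrable_diff integrable_divide_zero Bochner_Integration.integrable_sum
      integrable_h_X integrable_const) auto

lemma measurable_eps_nat_filtration: "j \<ge> 1 \<Longrightarrow> \<epsilon> j \<in> borel_measurable (F j)"
  unfolding srrw_eps_def
  using measurable_compose[OF measurable_nat_filtration borel_measurable_h] measurable_Delta_nat_filtration
  by measurable

lemma integrable_eps: "j \<ge> 1 \<Longrightarrow> integrable M (\<epsilon> j)"
  unfolding srrw_eps_def
  by (intro integrable_divide_zero Bochner_Integration.integrable_diff integrable_mult_right
      integrable_Delta integrable_h_X integrable_const)

lemma integral_indicator_eps_Suc: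
  assumes j: "j \<ge> 1" and A: "A \<in> sets (driver_sigma (srrw_drivers_upto j))"
  shows "(\<integral>w. indicator A w * \<epsilon> (Suc j) w \<partial>M) = 0"
proof -
  have A_events: "A \<in> events"
    using sets_driver_sigma_events[OF srrw_drivers_upto_subset A] .
  have int: "integrable M (\<lambda>w. h (X k w) * indicator A w)" if "k \<ge> 1" for k
    using that A_events by (intro integrable_real_mult_indicator integrable_h_X)
  have integrand: "(1 - \<alpha>) * (indicator A w * \<epsilon> (Suc j) w) = h (X (Suc j) w) * indicator A w
      - \<alpha> / j * (\<Sum>k\<in>{1..j}. h (X k w) * indicator A w) - (1 - \<alpha>) * integral\<^sup>L \<mu> h * indicator A w"
    for w
  proof -
    have "(\<Sum>k\<in>{1..j}. h (X k w) * indicator A w) = (\<Sum>k\<in>{1..j}. h (X k w)) * indicator A w"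
      by (simp add: sum_distrib_right)
    then show ?thesis
      using j \<alpha>_less_1 by (simp add: srrw_eps_def srrw_Delta_def field_simps)
  qed
  have "(1 - \<alpha>) * (\<integral>w. indicator A w * \<epsilon> (Suc j) w \<partial>M)
      = (\<integral>w. (1 - \<alpha>) * (indicator A w * \<epsilon> (Suc j) w) \<partial>M)"
    by simp
  also have "\<dots> = (\<integral>w. h (X (Suc j) w) * indicator A w
      - \<alpha> / j * (\<Sum>k\<in>{1..j}. h (X k w) * indicator A w) - (1 - \<alpha>) * integral\<^sup>L \<mu> h * indicator A w \<partial>M)"
    by (simp only: integrand)
  also have "\<dots> = (\<integral>w. h (X (Suc j) w) * indicator A w \<partial>M)
      - \<alpha> / j * (\<Sum>k\<in>{1..j}. \<integral>w. h (X k w) * indicator A w \<partial>M) - (1 - \<alpha>) * integral\<^sup>L \<mu> h * prob A"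
  proof -
    have copies: "integrable M (\<lambda>w. \<alpha> / j * (\<Sum>k\<in>{1..j}. h (X k w) * indicator A w))"
      using int by (intro integrable_mult_right Bochner_Integration.integrable_sum) auto
    have "integrable M (\<lambda>w. (1 - \<alpha>) * integral\<^sup>L \<mu> h * indicator A w :: real)"
      using A_events by (intro integrable_mult_right integrable_real_indicator) (auto simp: less_top[symmetric])
    moreover have "(\<integral>w. (\<Sum>k\<in>{1..j}. h (X k w) * indicator A w) \<partial>M)
        = (\<Sum>k\<in>{1..j}. \<integral>w. h (X k w) * indicator A w \<partial>M)"
      using int by (intro Bochner_Integration.integral_sum) auto
    ultimately show ?thesis
      using copies int[of "Suc j"] A_events
      by (simp del: sum_mult_indicator add: Bochner_Integration.integral_diff)
  qed
  also have "\<dots> = 0"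
    using integral_h_X_Suc_indicator[OF j A] by simp
  finally show ?thesis
    using \<alpha>_less_1 by simp
qed

lemma mart_diff_seq_eps: "mart_diff_seq M F \<epsilon>"
  unfolding mart_diff_seq_def
proof (intro allI impI conjI)
  fix j :: nat assume j: "j \<ge> 1"
  then show "\<epsilon> (j+1) \<in> borel_measurable (F (j+1))" "integrable M (\<epsilon> (j+1))"
    by (simp_all add: measurable_eps_nat_filtration integrable_eps)
  interpret sigma_finite_subalgebra M "F j"
    by (rule sigma_finite_subalgebra_nat_filtration)
  have "AE w in M. real_cond_exp M (F j) (\<epsilon> (Suc j)) w = 0"
  proof (rule real_cond_exp_charact)
    fix A assume "A \<in> sets (F j)"
    then show "(\<integral>w\<in>A. \<epsilon> (Suc j) w \<partial>M) = (\<integral>w\<in>A. 0 \<partial>M)"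
      using integral_indicator_eps_Suc[OF j] sets_nat_filtration_subset_driver_sigma[of j j]
      by (auto simp: set_lebesgue_integral_def)
  qed (use j integrable_eps in auto)
  then show "AE w in M. real_cond_exp M (F j) (\<epsilon> (j+1)) w = 0"
    by simp
qed

lemma integral_indicator_Delta:
  assumes k: "1 \<le> k" "k \<le> n" and A: "A \<in> sets (F k)"
  shows "(\<integral>w. indicator A w * \<Delta> n w \<partial>M) = srrw_beta \<alpha> n / srrw_beta \<alpha> k * (\<integral>w. indicator A w * \<Delta> k w \<partial>M)"
  using k(2)
proof (induction n rule: nat_induct_at_least)
  case base
  have "srrw_beta \<alpha> k \<noteq> 0"
    using srrw_beta_pos \<alpha>_nonneg by (smt (verit))
  then show ?case by simp
next
  case (Suc n)
  have A_events: "A \<in> events"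
    using A sets_nat_filtration_subset_driver_sigma[of k k]
      sets_driver_sigma_events[OF srrw_drivers_upto_subset] by blast
  have "A \<in> sets (driver_sigma (srrw_drivers_upto n))"
    using A sets_nat_filtration_subset_driver_sigma[OF Suc(1)] by blast
  then have eps: "(\<integral>w. indicator A w * \<epsilon> (Suc n) w \<partial>M) = 0"
    using k Suc(1) by (intro integral_indicator_eps_Suc) auto
  have Delta_Suc: "\<Delta> (Suc n) w = (1 - srrw_gamma \<alpha> n) * \<Delta> n w + srrw_gamma \<alpha> n * \<epsilon> (Suc n) w"
    for w using \<alpha>_less_1 k Suc(1) by (intro srrw_Delta_Suc) auto
  have "(\<integral>w. indicator A w * \<Delta> (Suc n) w \<partial>M)
      = (\<integral>w. (1 - srrw_gamma \<alpha> n) * (indicator A w * \<Delta> n w)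
            + srrw_gamma \<alpha> n * (indicator A w * \<epsilon> (Suc n) w) \<partial>M)"
    by (simp add: Delta_Suc algebra_simps)
  also have "\<dots> = (1 - srrw_gamma \<alpha> n) * (\<integral>w. indicator A w * \<Delta> n w \<partial>M)"
    using A_events k Suc(1) eps
    by (simp add: integrable_eps integrable_Delta integrable_real_mult_indicator mult.commute[of "indicator A _"])
  finally show ?case
    using Suc k by (simp add: srrw_beta_Suc)
qed

lemma real_cond_exp_Delta:
  assumes "1 \<le> k" "k \<le> n"
  shows "AE w in M. real_cond_exp M (F k) (\<Delta> n) w = srrw_beta \<alpha> n / srrw_beta \<alpha> k * \<Delta> k w"
proof -
  interpret sigma_finite_subalgebra M "F k"
    by (rule sigma_finite_subalgebra_nat_filtration)
  show ?thesis
  proof (rule real_cond_exp_charact)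
    fix A assume "A \<in> sets (F k)"
    then show "(\<integral>w\<in>A. \<Delta> n w \<partial>M) = (\<integral>w\<in>A. srrw_beta \<alpha> n / srrw_beta \<alpha> k * \<Delta> k w \<partial>M)"
      using integral_indicator_Delta[OF assms] by (simp add: set_lebesgue_integral_def mult_ac)
  qed (use measurable_Delta_nat_filtration integrable_Delta in auto)
qed

end

theorem lemma3p3:
  fixes M :: "'w measure" and \<mu> :: "(real ^ 'd) measure" and \<alpha> :: real
    and Y :: "nat \<Rightarrow> 'w \<Rightarrow> real ^ 'd" and \<xi> :: "nat \<Rightarrow> 'w \<Rightarrow> bool" and U :: "nat \<Rightarrow> 'w \<Rightarrow> nat"
    and X :: "nat \<Rightarrow> 'w \<Rightarrow> real ^ 'd" and h :: "real ^ 'd \<Rightarrow> real"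
  assumes M: "prob_space M"
    and \<alpha>: "0 \<le> \<alpha>" "\<alpha> < 1"
    and Y_meas: "\<And>n. n \<ge> 1 \<Longrightarrow> Y n \<in> borel_measurable M"
    and \<xi>_meas: "\<And>n. n \<ge> 2 \<Longrightarrow> \<xi> n \<in> measurable M (count_space UNIV)"
    and U_meas: "\<And>n. n \<ge> 1 \<Longrightarrow> U n \<in> measurable M (count_space UNIV)"
    and Y_distr: "\<And>n. n \<ge> 1 \<Longrightarrow> distr M borel (Y n) = \<mu>"
    and \<xi>_distr: "\<And>n. n \<ge> 2 \<Longrightarrow> distr M (count_space UNIV) (\<xi> n) = measure_pmf (bernoulli_pmf \<alpha>)"
    and U_distr: "\<And>n. n \<ge> 1 \<Longrightarrow> distr M (count_space UNIV) (U n) = measure_pmf (pmf_of_set {1..n})"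
    and indep: "srrw_drivers_indep M Y \<xi> U"
    and X_def: "X = srrw_X Y \<xi> U"
    and mom: "integrable \<mu> (\<lambda>x. norm x)"
    and mean0: "(\<integral>x. x \<partial>\<mu>) = 0"
    and h: "integrable \<mu> h"
  defines "F \<equiv> nat_filtration M X"
    and "\<Delta> \<equiv> srrw_Delta \<mu> h X"
    and "\<gamma> \<equiv> srrw_gamma \<alpha>"
    and "\<beta> \<equiv> srrw_beta \<alpha>"
    and "\<epsilon> \<equiv> (\<lambda>n w. (h (X n w) - integral\<^sup>L \<mu> h - \<alpha> * srrw_Delta \<mu> h X (n - 1) w) / (1 - \<alpha>))"
  shows "mart_diff_seq M F \<epsilon>
    \<and> (\<forall>n\<ge>1. \<forall>w\<in>space M.
          \<Delta> n w = \<beta> n * ((h (X 1 w) - integral\<^sup>L \<mu> h)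
                         + (\<Sum>j\<in>{1..<n}. \<gamma> j / \<beta> (j+1) * \<epsilon> (j+1) w)))
    \<and> (\<forall>n k. 1 \<le> k \<and> k < n \<longrightarrow>
          (AE w in M. real_cond_exp M (F k) (\<Delta> n) w = \<beta> n / \<beta> k * \<Delta> k w))"
proof -
  interpret srrw M \<mu> \<alpha> Y \<xi> U h
    using M \<alpha> Y_meas \<xi>_meas U_meas Y_distr \<xi>_distr U_distr indep h
    by (simp add: srrw_def srrw_axioms_def srrw_drivers_indep_iff)
  have \<epsilon>_eq: "\<epsilon> = srrw_eps \<alpha> \<mu> h X"
    unfolding \<epsilon>_def srrw_eps_def by (intro ext) simp
  have "-1 < \<alpha>" "\<alpha> \<noteq> 1"
    using \<alpha> by auto
  show ?thesis
    unfolding F_def \<Delta>_def \<gamma>_def \<beta>_def \<epsilon>_eq X_def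
    using mart_diff_seq_eps srrw_Delta_eq_beta_sum[OF \<open>-1 < \<alpha>\<close> \<open>\<alpha> \<noteq> 1\<close>, of _ \<mu> h "srrw_X Y \<xi> U"] real_cond_exp_Delta
    by auto
qed

end
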